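(* Let $X=X(s)$ be a strictly convex $C^{(3)}$ curve in the plane $\mathbb{R}^2$, parametrized by arclength. The following are equivalent: (1) there are functions $\lambda(s)$ and $\mu(s)$ such that for all $s$ and all sufficiently small $h_1,h_2$ (with $X(s),X(s+h_1),X(s+h_2)$ distinct), $U(s,h_1,h_2)=\lambda(s)\,T(s,h_1,h_2)^{\mu(s)}$; (2) for all $s$ and all sufficiently small $h_1,h_2$ (with the three points distinct), $U(s,h_1,h_2)=\frac12 T(s,h_1,h_2)$; (3) $X$ is an open part of a parabola.
   Context: A regular plane curve $X$ defined on an open interval is convex if for every point of $X$ the trace of $X$ lies entirely in one closed half-plane determined by the tangent line at that point. A simple convex curve $X$ is strictly convex if it is of class $C^{(3)}$ and has positive curvature with respect to the unit normal pointing to the convex side. For three distinct points $A=X(s)$, $A_i=X(s+h_i)$ ($i=1,2$) on $X$, let $\ell,\ell_1,\ell_2$ be the tangent lines of $X$ at $A,A_1,A_2$, and let $B=\ell_1\cap\ell_2$, $B_1=\ell\cap\ell_1$, $B_2=\ell\cap\ell_2$. Define $T(s,h_1,h_2)=|\triangle AA_1A_2|$ and $U(s,h_1,h_2)=|\triangle BB_1B_2|$ (areas). *)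

theory Defs
  imports "HOL-Analysis.Analysis"
begin

text \<open>The plane is modelled as the complex numbers.\<close>

definition cross2 :: "complex \<Rightarrow> complex \<Rightarrow> real" where
  "cross2 u v = Re u * Im v - Im u * Re v"

definition tri_area :: "complex \<Rightarrow> complex \<Rightarrow> complex \<Rightarrow> real" where
  "tri_area A B C = \<bar>cross2 (B - A) (C - A)\<bar> / 2"

text \<open>Intersection point of the lines P + a d and Q + b e (meaningful when not parallel).\<close>
definition line_inter :: "complex \<Rightarrow> complex \<Rightarrow> complex \<Rightarrow> complex \<Rightarrow> complex" where
  "line_inter P d Q e = P + of_real (cross2 (Q - P) e / cross2 d e) * d"

definition open_interval :: "real set \<Rightarrow> bool" where
  "open_interval I \<longleftrightarrow> is_interval I \<and> open I \<and> I \<noteq> {}"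

definition C3_on :: "real set \<Rightarrow> (real \<Rightarrow> complex) \<Rightarrow> bool" where
  "C3_on I X \<longleftrightarrow> (\<exists>X1 X2 X3.
      (\<forall>t\<in>I. (X has_vector_derivative X1 t) (at t)) \<and>
      (\<forall>t\<in>I. (X1 has_vector_derivative X2 t) (at t)) \<and>
      (\<forall>t\<in>I. (X2 has_vector_derivative X3 t) (at t)) \<and>
      continuous_on I X3)"

definition arclength_param :: "real set \<Rightarrow> (real \<Rightarrow> complex) \<Rightarrow> bool" where
  "arclength_param I X \<longleftrightarrow> (\<forall>t\<in>I. X differentiable (at t) \<and> norm (vector_derivative X (at t)) = 1)"

text \<open>Simple, convex, C^3, with positive curvature w.r.t. the unit normal pointing to the
  convex side. If the trace lies on the left of the tangent (cross2 \<ge> 0) this normal is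
  \<i> X', and the curvature is X''\<cdot>(\<i> X') = cross2 X' X''; symmetrically on the right.\<close>
definition strictly_convex_curve :: "real set \<Rightarrow> (real \<Rightarrow> complex) \<Rightarrow> bool" where
  "strictly_convex_curve I X \<longleftrightarrow> open_interval I \<and> C3_on I X \<and> inj_on X I \<and>
     (\<forall>t\<in>I. let d1 = vector_derivative X (at t);
                 d2 = vector_derivative (\<lambda>u. vector_derivative X (at u)) (at t) in
        d1 \<noteq> 0 \<and>
        (((\<forall>u\<in>I. cross2 d1 (X u - X t) \<ge> 0) \<and> cross2 d1 d2 > 0) \<or>
         ((\<forall>u\<in>I. cross2 d1 (X u - X t) \<le> 0) \<and> cross2 d1 d2 < 0)))"

definition T_area :: "(real \<Rightarrow> complex) \<Rightarrow> real \<Rightarrow> real \<Rightarrow> real \<Rightarrow> real" where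
  "T_area X s h1 h2 = tri_area (X s) (X (s + h1)) (X (s + h2))"

definition U_area :: "(real \<Rightarrow> complex) \<Rightarrow> real \<Rightarrow> real \<Rightarrow> real \<Rightarrow> real" where
  "U_area X s h1 h2 =
     (let A = X s; A1 = X (s + h1); A2 = X (s + h2);
          d = vector_derivative X (at s);
          d1 = vector_derivative X (at (s + h1));
          d2 = vector_derivative X (at (s + h2));
          B = line_inter A1 d1 A2 d2;
          B1 = line_inter A d A1 d1;
          B2 = line_inter A d A2 d2
      in tri_area B B1 B2)"

text \<open>Parabolas: rigid images of y = c x^2, c \<noteq> 0.\<close>
definition parabola :: "complex set \<Rightarrow> bool" where
  "parabola P \<longleftrightarrow> (\<exists>a u c. norm u = 1 \<and> c \<noteq> 0 \<and>
      P = range (\<lambda>t::real. a + of_real t * u + of_real (c * t\<^sup>2) * \<i> * u))"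

definition small_prop :: "real set \<Rightarrow> (real \<Rightarrow> complex) \<Rightarrow> (real \<Rightarrow> real \<Rightarrow> real \<Rightarrow> bool) \<Rightarrow> bool" where
  "small_prop I X Q \<longleftrightarrow> (\<forall>s\<in>I. \<exists>\<delta>>0. \<forall>h1 h2. \<bar>h1\<bar> < \<delta> \<and> \<bar>h2\<bar> < \<delta> \<and>
       s + h1 \<in> I \<and> s + h2 \<in> I \<and>
       X s \<noteq> X (s + h1) \<and> X s \<noteq> X (s + h2) \<and> X (s + h1) \<noteq> X (s + h2) \<longrightarrow> Q s h1 h2)"

end

theory Submission
  imports Defs "HOL-Computational_Algebra.Polynomial"
begin

text \<open>
  Fix \<open>s\<close> and use the Frenet frame of \<open>X\<close> at \<open>s\<close>, in which the curve is \<open>y \<approx> k x\<^sup>2 / 2\<close>.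
  Keep \<open>A1 = X u\<close> fixed and let \<open>A2 = X (s + h)\<close> tend to \<open>A = X s\<close>. Both triangles then have
  area of exact order \<open>|h|\<close>: \<open>2 T / |h| \<rightarrow> |y(u)|\<close> and \<open>2 U / |h| \<rightarrow> |k| \<beta>(u)\<^sup>2\<close>, where
  \<open>\<beta>(u)\<close> is the distance from \<open>A\<close> at which the tangents at \<open>s\<close> and \<open>u\<close> meet. Hence a law
  \<open>U = \<lambda> T\<^bsup>\<mu>\<^esup>\<close> forces \<open>\<mu> = 1\<close> and \<open>\<lambda> = |k| \<beta>(u)\<^sup>2 / |y(u)|\<close>, and letting \<open>u \<rightarrow> s\<close>
  (\<open>\<beta> \<sim> x/2\<close>, \<open>y \<sim> k x\<^sup>2/2\<close>) gives \<open>\<lambda> = 1/2\<close>.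

  Conversely, the law \<open>U = T/2\<close> yields \<open>2 k \<beta>(u)\<^sup>2 = y(u)\<close> near \<open>s\<close> (convexity fixes the
  signs). This is a first-order differential equation whose solutions are the conics
  \<open>k (x + b y)\<^sup>2 = 2 y\<close>, i.e. parabolas; the constant \<open>b\<close> is the same on both sides of \<open>s\<close>
  because it is determined by the third derivative of \<open>X\<close> at \<open>s\<close>. These local parabolas
  agree on overlaps, so by connectedness the whole curve lies on one parabola. On a parabola the
  law \<open>U = T/2\<close> is Archimedes' theorem on the triangle of three tangents.
\<close>

section \<open>Plane vector algebra\<close>

lemma cross2_eq_Im_cnj_mult: "cross2 u v = Im (cnj u * v)"
  by (simp add: cross2_def)

lemma bounded_linear_cross2_right: "bounded_linear (cross2 w)"
  unfolding cross2_eq_Im_cnj_mult[abs_def]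
  by (intro bounded_linear_compose[OF bounded_linear_Im] bounded_linear_mult_right)

lemma cross2_commute: "cross2 u v = - cross2 v u"
  by (simp add: cross2_def)

lemma cross2_scale_left: "cross2 (of_real r * v) u = r * cross2 v u"
  and cross2_scale_right: "cross2 u (of_real r * v) = r * cross2 u v"
  by (simp_all add: cross2_def algebra_simps)

lemma cross2_rotate:
  assumes "norm u = 1"
  shows "cross2 (u * z) (u * w) = cross2 z w"
proof -
  have "cross2 (u * z) (u * w) = ((Re u)\<^sup>2 + (Im u)\<^sup>2) * cross2 z w"
    by (simp add: cross2_def power2_eq_square algebra_simps)
  with assms show ?thesis by (simp flip: cmod_power2)
qed

lemma cross2_unit_frame:
  assumes "norm d = 1"
  shows "cross2 z w = (d \<bullet> z) * cross2 d w - cross2 d z * (d \<bullet> w)"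
proof -
  have "(d \<bullet> z) * cross2 d w - cross2 d z * (d \<bullet> w) = ((Re d)\<^sup>2 + (Im d)\<^sup>2) * cross2 z w"
    by (simp add: inner_complex_def cross2_def power2_eq_square algebra_simps)
  with assms show ?thesis by (simp flip: cmod_power2)
qed

lemma unit_frame_coords:
  assumes "norm d = 1"
  shows "w = d * (of_real (d \<bullet> w) + \<i> * of_real (cross2 d w))"
proof -
  have "d * (of_real (d \<bullet> w) + \<i> * of_real (cross2 d w)) = ((Re d)\<^sup>2 + (Im d)\<^sup>2) * w"
    by (simp add: inner_complex_def cross2_def complex_eq_iff power2_eq_square algebra_simps)
  with assms show ?thesis by (simp flip: cmod_power2)
qed

lemma tendsto_cross2 [tendsto_intros]:
  "(f \<longlongrightarrow> a) F \<Longrightarrow> (g \<longlongrightarrow> b) F \<Longrightarrow> ((\<lambda>x. cross2 (f x) (g x)) \<longlongrightarrow> cross2 a b) F"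
  unfolding cross2_def by (intro tendsto_intros)

lemma has_real_derivative_cross2:
  "(Y has_vector_derivative D) (at t) \<Longrightarrow> ((\<lambda>u. cross2 w (Y u)) has_real_derivative cross2 w D) (at t)"
  unfolding has_real_derivative_iff_has_vector_derivative
  by (rule bounded_linear.has_vector_derivative[OF bounded_linear_cross2_right])

lemma has_real_derivative_inner:
  "(Y has_vector_derivative D) (at t) \<Longrightarrow> ((\<lambda>u. w \<bullet> Y u) has_real_derivative w \<bullet> D) (at t)"
  unfolding has_real_derivative_iff_has_vector_derivative
  by (rule bounded_linear.has_vector_derivative[OF bounded_linear_inner_right])

lemma line_inter_commute:
  "cross2 d e \<noteq> 0 \<Longrightarrow> line_inter P d Q e = line_inter Q e P d"
  by (simp add: line_inter_def complex_eq_iff cross2_def field_simps)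

lemma line_inter_scale:
  assumes "r \<noteq> 0" "r' \<noteq> 0"
  shows "line_inter P (of_real r * d) Q (of_real r' * e) = line_inter P d Q e"
proof -
  have c: "r' * cross2 (Q - P) e / (r' * (r * cross2 d e)) * r = cross2 (Q - P) e / cross2 d e"
    using assms by (cases "cross2 d e = 0") (simp_all add: field_simps)
  have "of_real (r' * cross2 (Q - P) e / (r' * (r * cross2 d e))) * (of_real r * d)
      = of_real (r' * cross2 (Q - P) e / (r' * (r * cross2 d e)) * r) * d"
    by (simp only: of_real_mult mult.assoc)
  then show ?thesis
    unfolding line_inter_def cross2_scale_left cross2_scale_right c by simp
qed

lemma tri_area_rigid:
  "norm u = 1 \<Longrightarrow> tri_area (a + u * z0) (a + u * z1) (a + u * z2) = tri_area z0 z1 z2"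
  by (simp add: tri_area_def cross2_rotate flip: right_diff_distrib)

section \<open>Parabolas\<close>

definition parabola_point :: "complex \<Rightarrow> complex \<Rightarrow> real \<Rightarrow> real \<Rightarrow> complex" where
  "parabola_point a u c t = a + of_real t * u + of_real (c * t\<^sup>2) * \<i> * u"

definition parabola_tangent :: "complex \<Rightarrow> real \<Rightarrow> real \<Rightarrow> complex" where
  "parabola_tangent u c t = u + of_real (2 * c * t) * \<i> * u"

definition parabola_set :: "complex \<Rightarrow> complex \<Rightarrow> real \<Rightarrow> complex set" where
  "parabola_set a u c = range (parabola_point a u c)"

lemma parabola_iff_parabola_set:
  "parabola P \<longleftrightarrow> (\<exists>a u c. norm u = 1 \<and> c \<noteq> 0 \<and> P = parabola_set a u c)"
  unfolding parabola_def parabola_set_def parabola_point_def by blast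

lemma parabola_point_eq: "parabola_point a u c t = a + u * (of_real t + \<i> * of_real (c * t\<^sup>2))"
  by (simp add: parabola_point_def algebra_simps)

lemma parabola_tangent_eq: "parabola_tangent u c t = u * (1 + \<i> * of_real (2 * c * t))"
  by (simp add: parabola_tangent_def algebra_simps)

lemma has_vector_derivative_parabola_point:
  "(parabola_point a u c has_vector_derivative parabola_tangent u c t) (at t)"
proof -
  define F where "F z = a + z * u + of_real c * z\<^sup>2 * \<i> * u" for z :: complex
  have "(F has_field_derivative (u + of_real c * (2 * of_real t) * \<i> * u)) (at (of_real t))"
    unfolding F_def by (auto intro!: derivative_eq_intros simp: power2_eq_square)
  from has_vector_derivative_real_field[OF this]
  have "((\<lambda>x. F (of_real x)) has_vector_derivative parabola_tangent u c t) (at t)"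
    by (simp add: parabola_tangent_def algebra_simps)
  moreover have "(\<lambda>x. F (of_real x)) = parabola_point a u c"
    by (simp add: F_def parabola_point_def fun_eq_iff)
  ultimately show ?thesis by simp
qed

lemma parabola_point_iff_coords:
  assumes "u \<noteq> 0"
  shows "z = parabola_point a u c t \<longleftrightarrow> Re ((z - a) / u) = t \<and> Im ((z - a) / u) = c * t\<^sup>2"
proof -
  have "z = parabola_point a u c t \<longleftrightarrow> (z - a) / u = of_real t + \<i> * of_real (c * t\<^sup>2)"
    using assms by (auto simp: parabola_point_eq field_simps)
  then show ?thesis by (simp add: complex_eq_iff)
qed

lemma parabola_point_Re_coord:
  assumes "u \<noteq> 0" and "z \<in> parabola_set a u c"
  shows "z = parabola_point a u c (Re ((z - a) / u))"
proof -
  obtain t where "z = parabola_point a u c t"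
    using assms(2) unfolding parabola_set_def by blast
  moreover have "Re ((z - a) / u) = t"
    using calculation parabola_point_iff_coords[OF assms(1)] by blast
  ultimately show ?thesis by simp
qed

lemma mem_parabola_set_iff:
  assumes "u \<noteq> 0"
  shows "z \<in> parabola_set a u c \<longleftrightarrow> Im ((z - a) / u) = c * (Re ((z - a) / u))\<^sup>2"
proof
  assume "z \<in> parabola_set a u c"
  with assms show "Im ((z - a) / u) = c * (Re ((z - a) / u))\<^sup>2"
    using parabola_point_Re_coord parabola_point_iff_coords by blast
next
  assume "Im ((z - a) / u) = c * (Re ((z - a) / u))\<^sup>2"
  then have "z = parabola_point a u c (Re ((z - a) / u))"
    using parabola_point_iff_coords[OF assms] by blast
  then show "z \<in> parabola_set a u c"
    unfolding parabola_set_def by (metis rangeI)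
qed

text \<open>Two parabolas sharing infinitely many points coincide: the equation of the second one,
  pulled back along the parametrization of the first, is a polynomial of degree at most four.\<close>
lemma parabola_set_subset:
  assumes u2: "u2 \<noteq> 0" and S: "infinite S"
    and S1: "S \<subseteq> parabola_set a1 u1 c1" and S2: "S \<subseteq> parabola_set a2 u2 c2"
  shows "parabola_set a1 u1 c1 \<subseteq> parabola_set a2 u2 c2"
proof -
  let ?g = "parabola_point a1 u1 c1"
  define D where "D = (a1 - a2) / u2"
  define W where "W = u1 / u2"
  define q where "q = [:Re D, Re W, - (c1 * Im W):]"
  define p where "p = [:Im D, Im W, c1 * Re W:] - smult c2 (q * q)"
  have "(?g t - a2) / u2 = D + of_real t * W + of_real (c1 * t\<^sup>2) * \<i> * W" for t
    using u2 unfolding parabola_point_def D_def W_def by (simp add: field_simps)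
  then have p_eval: "poly p t = 0 \<longleftrightarrow> ?g t \<in> parabola_set a2 u2 c2" for t
    unfolding mem_parabola_set_iff[OF u2] p_def q_def by (simp add: power2_eq_square algebra_simps)
  have "S = ?g ` (?g -` S)"
    using S1 unfolding parabola_set_def by blast
  then have "infinite (?g -` S)" using S by (metis finite_imageI)
  moreover have "?g -` S \<subseteq> {t. poly p t = 0}"
    using S2 p_eval by auto
  ultimately have "p = 0"
    using poly_roots_finite finite_subset by blast
  then show ?thesis
    using p_eval unfolding parabola_set_def by auto
qed

lemma parabola_set_unique:
  "u1 \<noteq> 0 \<Longrightarrow> u2 \<noteq> 0 \<Longrightarrow> infinite S \<Longrightarrow> S \<subseteq> parabola_set a1 u1 c1 \<Longrightarrow>
    S \<subseteq> parabola_set a2 u2 c2 \<Longrightarrow> parabola_set a1 u1 c1 = parabola_set a2 u2 c2"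
  using parabola_set_subset by (metis subset_antisym)

lemma rotated_frame_coords:
  assumes d: "norm d = 1" and r: "r > 0" "r * r = 1 + b\<^sup>2"
  shows "w / (d * (1 + \<i> * of_real b) / of_real r) =
    of_real ((d \<bullet> w + b * cross2 d w) / r) + \<i> * of_real ((cross2 d w - b * (d \<bullet> w)) / r)"
proof -
  define x where "x = d \<bullet> w"
  define y where "y = cross2 d w"
  define \<tau> where "\<tau> = (x + b * y) / r"
  define \<eta> where "\<eta> = (y - b * x) / r"
  have "\<tau> - b * \<eta> = x * (1 + b\<^sup>2) / r" "\<eta> + b * \<tau> = y * (1 + b\<^sup>2) / r"
    using r(1) by (simp_all add: \<tau>_def \<eta>_def field_simps power2_eq_square)
  then have "\<tau> - b * \<eta> = x * r" "\<eta> + b * \<tau> = y * r"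
    unfolding r(2)[symmetric] using r(1) by simp_all
  then have *: "(of_real \<tau> + \<i> * of_real \<eta>) * (1 + \<i> * of_real b) = of_real r * (of_real x + \<i> * of_real y)"
    by (simp add: complex_eq_iff algebra_simps)
  have "(of_real \<tau> + \<i> * of_real \<eta>) * (d * (1 + \<i> * of_real b) / of_real r)
      = (of_real \<tau> + \<i> * of_real \<eta>) * (1 + \<i> * of_real b) * d / of_real r"
    by simp
  also have "\<dots> = d * (of_real x + \<i> * of_real y)"
    unfolding * using r(1) by simp
  also have "\<dots> = w"
    unfolding x_def y_def by (rule unit_frame_coords[OF d, symmetric])
  finally have "(of_real \<tau> + \<i> * of_real \<eta>) * (d * (1 + \<i> * of_real b) / of_real r) = w" .
  moreover have "1 + \<i> * of_real b \<noteq> 0"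
    by (simp add: complex_eq_iff)
  then have "d * (1 + \<i> * of_real b) / of_real r \<noteq> 0"
    using d r(1) by auto
  ultimately show ?thesis
    unfolding \<tau>_def \<eta>_def x_def y_def by (metis nonzero_mult_div_cancel_right)
qed

text \<open>The axis of the parabola points along \<open>\<i> u\<close>, where \<open>u\<close> is \<open>d\<close> turned by the angle
  \<open>arctan b\<close>.\<close>
lemma conic_subset_parabola_set:
  assumes d: "norm d = 1" and k0: "k0 \<noteq> 0"
  shows "\<exists>a u c. norm u = 1 \<and> c \<noteq> 0 \<and>
    {z. k0 * (d \<bullet> (z - A) + b * cross2 d (z - A))\<^sup>2 = 2 * cross2 d (z - A)} \<subseteq> parabola_set a u c"
proof -
  define r where "r = sqrt (1 + b\<^sup>2)"
  have r: "r > 0" "r * r = 1 + b\<^sup>2"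
    unfolding r_def by (simp_all add: add_pos_nonneg)
  define u where "u = d * (1 + \<i> * of_real b) / of_real r"
  define c where "c = k0 * r ^ 3 / 2"
  define m where "m = b / (2 * c)"
  define a where "a = A + u * (of_real m - \<i> * of_real (c * m\<^sup>2))"
  have c: "c \<noteq> 0" using k0 r by (simp add: c_def)
  have "norm (1 + \<i> * of_real b) = r"
    unfolding r_def by (simp add: cmod_def power2_eq_square)
  then have u: "norm u = 1"
    using d r by (simp add: u_def norm_mult norm_divide)
  then have u0: "u \<noteq> 0" by auto
  have "z \<in> parabola_set a u c"
    if rel: "k0 * (d \<bullet> (z - A) + b * cross2 d (z - A))\<^sup>2 = 2 * cross2 d (z - A)" for z
  proof -
    define x where "x = d \<bullet> (z - A)"
    define y where "y = cross2 d (z - A)"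
    define \<tau> where "\<tau> = (x + b * y) / r"
    define \<eta> where "\<eta> = (y - b * x) / r"
    have "(z - A) / u = of_real \<tau> + \<i> * of_real \<eta>"
      unfolding u_def \<tau>_def \<eta>_def x_def y_def by (rule rotated_frame_coords[OF d r])
    moreover have "(z - a) / u = (z - A) / u - (of_real m - \<i> * of_real (c * m\<^sup>2))"
      using u0 by (simp add: a_def field_simps)
    ultimately have za: "(z - a) / u = of_real (\<tau> - m) + \<i> * of_real (\<eta> + c * m\<^sup>2)"
      by (simp add: complex_eq_iff)
    have "c * \<tau>\<^sup>2 = r * (k0 * (r * \<tau>)\<^sup>2) / 2"
      by (simp add: c_def power2_eq_square power3_eq_cube)
    also have "k0 * (r * \<tau>)\<^sup>2 = 2 * y"
      using rel r(1) by (simp add: x_def y_def \<tau>_def)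
    finally have "c * \<tau>\<^sup>2 = r * y" by simp
    moreover have "\<eta> + b * \<tau> = y * (1 + b\<^sup>2) / r"
      using r(1) by (simp add: \<tau>_def \<eta>_def field_simps power2_eq_square)
    ultimately have "\<eta> = c * \<tau>\<^sup>2 - b * \<tau>"
      unfolding r(2)[symmetric] using r(1) by (simp add: algebra_simps)
    moreover have "2 * c * m = b"
      using c by (simp add: m_def)
    ultimately show ?thesis
      unfolding mem_parabola_set_iff[OF u0] za by (simp add: power2_eq_square algebra_simps)
  qed
  with u c show ?thesis by blast
qed

text \<open>The coordinate \<open>Re ((z - a) / u)\<close> is a homeomorphism of the parabola onto \<open>\<real>\<close>, so
  openness of the image follows from invariance of domain.\<close>
lemma openin_parabola_set_image:
  fixes X :: "real \<Rightarrow> complex"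
  assumes u: "u \<noteq> 0" and sub: "X ` I \<subseteq> parabola_set a u c"
    and cont: "continuous_on I X" and inj: "inj_on X I" and "open I"
  shows "openin (top_of_set (parabola_set a u c)) (X ` I)"
proof -
  define \<phi> where "\<phi> z = Re ((z - a) / u)" for z
  have \<phi>_inv: "z \<in> parabola_set a u c \<Longrightarrow> parabola_point a u c (\<phi> z) = z" for z
    unfolding \<phi>_def using parabola_point_Re_coord[OF u] by metis
  have cont_\<phi>: "continuous (at z) \<phi>" for z
    unfolding \<phi>_def isCont_def using u by (intro tendsto_intros) auto
  have "continuous_on I (\<phi> \<circ> X)"
    by (intro continuous_on_compose cont continuous_at_imp_continuous_on ballI cont_\<phi>)
  moreover have "inj_on (\<phi> \<circ> X) I"
    using inj sub \<phi>_inv by (smt (verit) comp_apply image_subset_iff inj_on_def)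
  ultimately have "open ((\<phi> \<circ> X) ` I)"
    using invariance_of_domain \<open>open I\<close> by blast
  then have "open (\<phi> -` ((\<phi> \<circ> X) ` I))"
    by (rule continuous_open_vimage) (rule cont_\<phi>)
  moreover have "X ` I = parabola_set a u c \<inter> \<phi> -` ((\<phi> \<circ> X) ` I)"
    using sub \<phi>_inv by (auto simp: image_iff) (metis image_subset_iff)
  ultimately show ?thesis
    unfolding openin_open by blast
qed

lemma line_inter_parabola_tangents:
  assumes u: "norm u = 1" and c: "c \<noteq> 0" and t: "t1 \<noteq> t2"
  shows "line_inter (parabola_point a u c t1) (parabola_tangent u c t1)
                    (parabola_point a u c t2) (parabola_tangent u c t2) =
         a + u * (of_real ((t1 + t2) / 2) + \<i> * of_real (c * t1 * t2))"
proof -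
  have diff: "parabola_point a u c t2 - parabola_point a u c t1
      = u * ((of_real t2 + \<i> * of_real (c * t2\<^sup>2)) - (of_real t1 + \<i> * of_real (c * t1\<^sup>2)))"
    by (simp add: parabola_point_eq algebra_simps)
  have num: "cross2 (parabola_point a u c t2 - parabola_point a u c t1) (parabola_tangent u c t2)
      = c * (t2 - t1)\<^sup>2"
    unfolding diff parabola_tangent_eq cross2_rotate[OF u]
    by (simp add: cross2_def power2_eq_square algebra_simps)
  have den: "cross2 (parabola_tangent u c t1) (parabola_tangent u c t2) = 2 * c * (t2 - t1)"
    unfolding parabola_tangent_eq cross2_rotate[OF u] by (simp add: cross2_def algebra_simps)
  have ratio: "c * (t2 - t1)\<^sup>2 / (2 * c * (t2 - t1)) = (t2 - t1) / 2"
    using c t by (simp add: power2_eq_square field_simps)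
  show ?thesis
    unfolding line_inter_def num den ratio
    by (simp add: parabola_point_eq parabola_tangent_eq complex_eq_iff power2_eq_square field_simps)
qed

lemma tangent_triangle_area_parabola:
  fixes a u :: complex and c t0 t1 t2 r0 r1 r2 :: real
  assumes u: "norm u = 1" and c: "c \<noteq> 0" and t: "t0 \<noteq> t1" "t0 \<noteq> t2" "t1 \<noteq> t2"
    and r: "r0 \<noteq> 0" "r1 \<noteq> 0" "r2 \<noteq> 0"
  defines "A i \<equiv> parabola_point a u c i" and "d r i \<equiv> of_real r * parabola_tangent u c i"
  shows "tri_area (line_inter (A t1) (d r1 t1) (A t2) (d r2 t2))
                  (line_inter (A t0) (d r0 t0) (A t1) (d r1 t1))
                  (line_inter (A t0) (d r0 t0) (A t2) (d r2 t2))
       = tri_area (A t0) (A t1) (A t2) / 2"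
proof -
  define m where "m x y = of_real ((x + y) / 2) + \<i> * of_real (c * x * y)" for x y
  define w where "w x = of_real x + \<i> * of_real (c * x\<^sup>2)" for x
  have "tri_area (line_inter (A t1) (d r1 t1) (A t2) (d r2 t2))
                 (line_inter (A t0) (d r0 t0) (A t1) (d r1 t1))
                 (line_inter (A t0) (d r0 t0) (A t2) (d r2 t2))
      = tri_area (m t1 t2) (m t0 t1) (m t0 t2)"
    unfolding A_def d_def line_inter_scale[OF r(2) r(3)] line_inter_scale[OF r(1) r(2)]
      line_inter_scale[OF r(1) r(3)] line_inter_parabola_tangents[OF u c t(3)]
      line_inter_parabola_tangents[OF u c t(1)] line_inter_parabola_tangents[OF u c t(2)]
    unfolding m_def by (rule tri_area_rigid[OF u])
  moreover have "tri_area (A t0) (A t1) (A t2) = tri_area (w t0) (w t1) (w t2)"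
    unfolding A_def parabola_point_eq w_def by (rule tri_area_rigid[OF u])
  moreover have "cross2 (m t0 t1 - m t1 t2) (m t0 t2 - m t1 t2) = c * (t1 - t0) * (t2 - t0) * (t2 - t1) / 2"
    by (simp add: m_def cross2_def field_simps)
  moreover have "cross2 (w t1 - w t0) (w t2 - w t0) = c * (t1 - t0) * (t2 - t0) * (t2 - t1)"
    by (simp add: w_def cross2_def power2_eq_square algebra_simps)
  ultimately show ?thesis
    by (simp add: tri_area_def)
qed

section \<open>Real analysis near a point\<close>

lemma eventually_nonzero_at_0: "eventually (\<lambda>h::real. h \<noteq> 0) (at 0)"
  by (simp add: eventually_at_filter)

lemma eventually_abs_less_at_0: "\<delta> > 0 \<Longrightarrow> eventually (\<lambda>h::real. \<bar>h\<bar> < \<delta>) (at 0)"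
  by (auto simp: eventually_at intro!: exI[of _ \<delta>])

lemma powr_abs_tendsto_0: "e > 0 \<Longrightarrow> ((\<lambda>h::real. \<bar>h\<bar> powr e) \<longlongrightarrow> 0) (at 0)"
  by (rule tendsto_zero_powrI) (auto intro!: tendsto_eq_intros)

lemma abs_powr_tendsto_nonzero:
  assumes lim: "((\<lambda>h::real. \<bar>h\<bar> powr e) \<longlongrightarrow> C) (at 0)" and "C \<noteq> 0"
  shows "e = 0"
proof (rule ccontr)
  assume "e \<noteq> 0"
  then consider "e > 0" | "- e > 0" by linarith
  then show False
  proof cases
    case 1
    then have "C = 0"
      using tendsto_unique[OF _ lim powr_abs_tendsto_0] by simp
    with \<open>C \<noteq> 0\<close> show False ..
  next
    case 2
    have "((\<lambda>h. inverse (\<bar>h\<bar> powr e)) \<longlongrightarrow> inverse C) (at 0)"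
      using tendsto_inverse[OF lim \<open>C \<noteq> 0\<close>] .
    then have "((\<lambda>h. \<bar>h\<bar> powr (- e)) \<longlongrightarrow> inverse C) (at 0)"
      by (simp add: powr_minus)
    then have "inverse C = 0"
      by (rule tendsto_unique[OF at_neq_bot _ powr_abs_tendsto_0[OF 2]])
    with \<open>C \<noteq> 0\<close> show False by simp
  qed
qed

text \<open>Read \<open>f h * |h|\<close> and \<open>g h * |h|\<close> as two quantities of exact order \<open>|h|\<close>: a power law
  between them must be linear, since otherwise \<open>|h| powr (mu - 1)\<close> would have a nonzero limit.\<close>
lemma power_law_linear_at_0:
  fixes f g :: "real \<Rightarrow> real"
  assumes f: "(f \<longlongrightarrow> A) (at 0)" and g: "(g \<longlongrightarrow> B) (at 0)" and "A > 0" "B > 0"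
    and law: "eventually (\<lambda>h. f h * \<bar>h\<bar> = lam * (g h * \<bar>h\<bar>) powr mu) (at 0)"
  shows "mu = 1 \<and> lam = A / B"
proof -
  have pos: "eventually (\<lambda>h. h \<noteq> 0 \<and> f h > 0 \<and> g h > 0) (at 0)"
    using order_tendstoD(1)[OF f \<open>A > 0\<close>] order_tendstoD(1)[OF g \<open>B > 0\<close>]
    by (auto simp: eventually_at_filter elim: eventually_elim2)
  have key: "eventually (\<lambda>h. f h = lam * g h powr mu * \<bar>h\<bar> powr (mu - 1) \<and> f h > 0 \<and> g h > 0) (at 0)"
    using law pos
  proof eventually_elim
    case (elim h)
    then have "f h * \<bar>h\<bar> = (lam * g h powr mu * \<bar>h\<bar> powr (mu - 1)) * \<bar>h\<bar>"
      by (simp add: powr_mult powr_diff)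
    with elim show ?case by simp
  qed
  have "lam \<noteq> 0"
  proof
    assume "lam = 0"
    have "eventually (\<lambda>h::real. False) (at 0)"
      using key by eventually_elim (auto simp: \<open>lam = 0\<close>)
    then show False by simp
  qed
  define C where "C = A / (lam * B powr mu)"
  have "C \<noteq> 0"
    using \<open>lam \<noteq> 0\<close> \<open>A > 0\<close> \<open>B > 0\<close> by (simp add: C_def)
  have "((\<lambda>h. f h / (lam * g h powr mu)) \<longlongrightarrow> C) (at 0)"
    unfolding C_def using \<open>B > 0\<close> \<open>lam \<noteq> 0\<close> by (intro tendsto_intros f g) auto
  moreover have "eventually (\<lambda>h. f h / (lam * g h powr mu) = \<bar>h\<bar> powr (mu - 1)) (at 0)"
    using key by eventually_elim (use \<open>lam \<noteq> 0\<close> in simp)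
  ultimately have "((\<lambda>h. \<bar>h\<bar> powr (mu - 1)) \<longlongrightarrow> C) (at 0)"
    by (rule Lim_transform_eventually)
  then have "mu = 1"
    using abs_powr_tendsto_nonzero[OF _ \<open>C \<noteq> 0\<close>] by fastforce
  have "((\<lambda>h. f h / g h) \<longlongrightarrow> A / B) (at 0)"
    using \<open>B > 0\<close> by (intro tendsto_intros f g) auto
  moreover have "eventually (\<lambda>h. f h / g h = lam) (at 0)"
    using key by eventually_elim (auto simp: \<open>mu = 1\<close> split: if_splits)
  ultimately have "((\<lambda>h. lam) \<longlongrightarrow> A / B) (at (0::real))"
    by (rule Lim_transform_eventually)
  then have "lam = A / B"
    by (rule tendsto_unique[OF at_neq_bot tendsto_const])
  with \<open>mu = 1\<close> show ?thesis by simp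
qed

lemma DERIV_zero_if_vanishing_on_open:
  fixes f :: "real \<Rightarrow> real"
  assumes "open S" "x \<in> S" "\<And>y. y \<in> S \<Longrightarrow> f y = 0" "DERIV f x :> D"
  shows "D = 0"
proof -
  have "DERIV f x :> 0"
    by (rule has_field_derivative_transform_within_open[OF DERIV_const assms(1,2)]) (simp add: assms(3))
  with assms(4) show ?thesis by (rule DERIV_unique)
qed

lemma third_derivative_zero_at_limit_point:
  fixes f f1 f2 f3 :: "real \<Rightarrow> real"
  assumes S: "open S" "x islimpt S" and f: "\<And>u. u \<in> S \<Longrightarrow> f u = 0"
    and D: "\<And>u. u \<in> S \<Longrightarrow> DERIV f u :> f1 u" "\<And>u. u \<in> S \<Longrightarrow> DERIV f1 u :> f2 u"
      "\<And>u. u \<in> S \<Longrightarrow> DERIV f2 u :> f3 u"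
    and cont: "isCont f3 x"
  shows "f3 x = 0"
proof -
  have "\<And>u. u \<in> S \<Longrightarrow> f1 u = 0"
    using DERIV_zero_if_vanishing_on_open[OF S(1) _ f D(1)] .
  then have "\<And>u. u \<in> S \<Longrightarrow> f2 u = 0"
    using DERIV_zero_if_vanishing_on_open[OF S(1) _ _ D(2)] by blast
  then have "\<And>u. u \<in> S \<Longrightarrow> f3 u = 0"
    using DERIV_zero_if_vanishing_on_open[OF S(1) _ _ D(3)] by blast
  then have "(f3 \<longlongrightarrow> 0) (at x within S)"
    by (intro Lim_transform_eventually[OF tendsto_const]) (auto simp: eventually_at_filter)
  moreover have "(f3 \<longlongrightarrow> f3 x) (at x within S)"
    using continuous_at_imp_continuous_within[OF cont] by (simp add: continuous_within)
  moreover have "at x within S \<noteq> bot"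
    using S(2) trivial_limit_within by blast
  ultimately show ?thesis
    using tendsto_unique by metis
qed

section \<open>Convex unit-speed curves\<close>

abbreviation half_area_law :: "(real \<Rightarrow> complex) \<Rightarrow> real \<Rightarrow> real \<Rightarrow> real \<Rightarrow> bool" where
  "half_area_law X s h1 h2 \<equiv> U_area X s h1 h2 = T_area X s h1 h2 / 2"

definition small_prop_at ::
    "real set \<Rightarrow> (real \<Rightarrow> complex) \<Rightarrow> (real \<Rightarrow> real \<Rightarrow> real \<Rightarrow> bool) \<Rightarrow> real \<Rightarrow> real \<Rightarrow> bool" where
  "small_prop_at I X Q s \<delta> \<longleftrightarrow> (\<forall>h1 h2. \<bar>h1\<bar> < \<delta> \<and> \<bar>h2\<bar> < \<delta> \<and> s + h1 \<in> I \<and> s + h2 \<in> I \<and>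
       X s \<noteq> X (s + h1) \<and> X s \<noteq> X (s + h2) \<and> X (s + h1) \<noteq> X (s + h2) \<longrightarrow> Q s h1 h2)"

lemma small_prop_iff_small_prop_at:
  "small_prop I X Q \<longleftrightarrow> (\<forall>s\<in>I. \<exists>\<delta>>0. small_prop_at I X Q s \<delta>)"
  by (simp add: small_prop_def small_prop_at_def)

text \<open>The sign condition \<open>convex\<close> merges the two alternatives of \<open>strictly_convex_curve\<close>:
  the trace lies on the side of each tangent towards which the curve bends.\<close>
locale convex_unit_speed_curve =
  fixes I :: "real set" and X X1 X2 X3 :: "real \<Rightarrow> complex"
  assumes open_I: "open I" and interval_I: "is_interval I"
    and D1: "\<And>t. t \<in> I \<Longrightarrow> (X has_vector_derivative X1 t) (at t)"
    and D2: "\<And>t. t \<in> I \<Longrightarrow> (X1 has_vector_derivative X2 t) (at t)"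
    and D3: "\<And>t. t \<in> I \<Longrightarrow> (X2 has_vector_derivative X3 t) (at t)"
    and cont_X3: "continuous_on I X3"
    and unit_speed: "\<And>t. t \<in> I \<Longrightarrow> norm (X1 t) = 1"
    and inj: "inj_on X I"
    and convex: "\<And>t u. t \<in> I \<Longrightarrow> u \<in> I \<Longrightarrow> cross2 (X1 t) (X u - X t) * cross2 (X1 t) (X2 t) \<ge> 0"
    and curvature_nonzero: "\<And>t. t \<in> I \<Longrightarrow> cross2 (X1 t) (X2 t) \<noteq> 0"
    and nonempty: "I \<noteq> {}"
begin

definition curv :: "real \<Rightarrow> real" where
  "curv s0 = cross2 (X1 s0) (X2 s0)"

text \<open>\<open>xc s0 u\<close> and \<open>yc s0 u\<close> are the coordinates of \<open>X u\<close> in the Frenet frame at \<open>s0\<close>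
  (origin \<open>X s0\<close>, axes \<open>X1 s0\<close> and \<open>\<i> * X1 s0\<close>); \<open>xcN\<close>, \<open>ycN\<close> are their \<open>N\<close>-th derivatives.\<close>
definition "xc s0 u = X1 s0 \<bullet> (X u - X s0)"
definition "yc s0 u = cross2 (X1 s0) (X u - X s0)"
definition "xc1 s0 u = X1 s0 \<bullet> X1 u"
definition "yc1 s0 u = cross2 (X1 s0) (X1 u)"
definition "xc2 s0 u = X1 s0 \<bullet> X2 u"
definition "yc2 s0 u = cross2 (X1 s0) (X2 u)"
definition "xc3 s0 u = X1 s0 \<bullet> X3 u"
definition "yc3 s0 u = cross2 (X1 s0) (X3 u)"

lemma DERIV_xc: "u \<in> I \<Longrightarrow> DERIV (xc s0) u :> xc1 s0 u"
  unfolding xc_def[abs_def] xc1_def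
  using D1 by (simp add: has_real_derivative_inner has_vector_derivative_diff_const)

lemma DERIV_yc: "u \<in> I \<Longrightarrow> DERIV (yc s0) u :> yc1 s0 u"
  unfolding yc_def[abs_def] yc1_def
  using D1 by (simp add: has_real_derivative_cross2 has_vector_derivative_diff_const)

lemma DERIV_xc1: "u \<in> I \<Longrightarrow> DERIV (xc1 s0) u :> xc2 s0 u"
  unfolding xc1_def[abs_def] xc2_def by (rule has_real_derivative_inner, erule D2)

lemma DERIV_yc1: "u \<in> I \<Longrightarrow> DERIV (yc1 s0) u :> yc2 s0 u"
  unfolding yc1_def[abs_def] yc2_def by (rule has_real_derivative_cross2, erule D2)

lemma DERIV_xc2: "u \<in> I \<Longrightarrow> DERIV (xc2 s0) u :> xc3 s0 u"
  unfolding xc2_def[abs_def] xc3_def by (rule has_real_derivative_inner, erule D3)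

lemma DERIV_yc2: "u \<in> I \<Longrightarrow> DERIV (yc2 s0) u :> yc3 s0 u"
  unfolding yc2_def[abs_def] yc3_def by (rule has_real_derivative_cross2, erule D3)

lemma xc_self [simp]: "xc s0 s0 = 0" and yc_self [simp]: "yc s0 s0 = 0"
  and yc1_self [simp]: "yc1 s0 s0 = 0" and yc2_self: "yc2 s0 s0 = curv s0"
  by (simp_all add: xc_def yc_def yc1_def yc2_def curv_def cross2_def)

lemma xc1_self: "s0 \<in> I \<Longrightarrow> xc1 s0 s0 = 1"
  using unit_speed by (simp add: xc1_def inner_complex_def cmod_def power2_eq_square)

lemma cross2_in_frame: "s0 \<in> I \<Longrightarrow> cross2 z w = (X1 s0 \<bullet> z) * cross2 (X1 s0) w - cross2 (X1 s0) z * (X1 s0 \<bullet> w)"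
  by (rule cross2_unit_frame[OF unit_speed])

lemma isCont_X: "t \<in> I \<Longrightarrow> isCont X t"
  and isCont_X1: "t \<in> I \<Longrightarrow> isCont X1 t"
  and isCont_X3: "t \<in> I \<Longrightarrow> isCont X3 t"
  using D1 D2 has_vector_derivative_continuous cont_X3 open_I continuous_on_eq_continuous_at
  by blast+

lemma vector_derivative_X: "t \<in> I \<Longrightarrow> vector_derivative X (at t) = X1 t"
  using D1 vector_derivative_at by blast

lemma curv_nonzero: "s0 \<in> I \<Longrightarrow> curv s0 \<noteq> 0"
  using curvature_nonzero by (simp add: curv_def)

lemma eventually_in_I:
  assumes "s0 \<in> I"
  shows "eventually (\<lambda>h. s0 + h \<in> I) (at 0)"
proof -
  have "((\<lambda>h. s0 + h) \<longlongrightarrow> s0) (at 0)"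
    by (auto intro!: tendsto_eq_intros)
  then show ?thesis
    using topological_tendstoD open_I assms by fastforce
qed

lemma tendsto_xc1: "s0 \<in> I \<Longrightarrow> ((\<lambda>h. xc1 s0 (s0 + h)) \<longlongrightarrow> 1) (at 0)"
  using DERIV_isCont[OF DERIV_xc1, of s0 s0] by (simp add: isCont_iff xc1_self)

lemma tendsto_xc_div: "s0 \<in> I \<Longrightarrow> ((\<lambda>h. xc s0 (s0 + h) / h) \<longlongrightarrow> 1) (at 0)"
  using DERIV_xc[of s0 s0] unfolding DERIV_def by (simp add: xc1_self)

lemma tendsto_yc_div: "s0 \<in> I \<Longrightarrow> ((\<lambda>h. yc s0 (s0 + h) / h) \<longlongrightarrow> 0) (at 0)"
  using DERIV_yc[of s0 s0] unfolding DERIV_def by simp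

lemma tendsto_yc1_div: "s0 \<in> I \<Longrightarrow> ((\<lambda>h. yc1 s0 (s0 + h) / h) \<longlongrightarrow> curv s0) (at 0)"
  using DERIV_yc1[of s0 s0] unfolding DERIV_def by (simp add: yc2_self)

lemma tendsto_yc_div_square:
  assumes s0: "s0 \<in> I"
  shows "((\<lambda>h. yc s0 (s0 + h) / h\<^sup>2) \<longlongrightarrow> curv s0 / 2) (at 0)"
proof (rule lhopital)
  show "((\<lambda>h. yc s0 (s0 + h)) \<longlongrightarrow> 0) (at 0)"
    using DERIV_isCont[OF DERIV_yc[OF s0, of s0]] by (simp add: isCont_iff)
  show "((\<lambda>h::real. h\<^sup>2) \<longlongrightarrow> 0) (at 0)"
    by (intro tendsto_eq_intros) auto
  show "eventually (\<lambda>h. h\<^sup>2 \<noteq> 0) (at (0::real))"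
    using eventually_nonzero_at_0 by eventually_elim simp
  show "eventually (\<lambda>h. 2 * h \<noteq> 0) (at (0::real))"
    using eventually_nonzero_at_0 by eventually_elim simp
  show "eventually (\<lambda>h. DERIV (\<lambda>h. yc s0 (s0 + h)) h :> yc1 s0 (s0 + h)) (at 0)"
    using eventually_in_I[OF s0]
  proof eventually_elim
    case (elim h)
    have "DERIV (\<lambda>h. s0 + h) h :> 1" by (auto intro!: derivative_eq_intros)
    from DERIV_chain2[OF DERIV_yc[OF elim] this] show ?case by simp
  qed
  show "eventually (\<lambda>h::real. DERIV (\<lambda>h. h\<^sup>2) h :> 2 * h) (at 0)"
    using DERIV_pow[of 2] by (intro always_eventually allI) simp
  show "((\<lambda>h. yc1 s0 (s0 + h) / (2 * h)) \<longlongrightarrow> curv s0 / 2) (at 0)"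
    using tendsto_divide[OF tendsto_yc1_div[OF s0] tendsto_const[of 2]] by (simp add: field_simps)
qed

lemma eventually_yc1_nonzero: "s0 \<in> I \<Longrightarrow> eventually (\<lambda>h. yc1 s0 (s0 + h) \<noteq> 0) (at 0)"
  using tendsto_imp_eventually_ne[OF tendsto_yc1_div curv_nonzero]
  by (rule eventually_mono) auto

text \<open>The tangent at \<open>u\<close> meets the tangent at \<open>s0\<close> in \<open>X s0 + tmeet s0 u * X1 s0\<close>.\<close>
definition "tmeet s0 u = xc s0 u - yc s0 u * xc1 s0 u / yc1 s0 u"

lemma tmeet_eq_cross2:
  "s0 \<in> I \<Longrightarrow> yc1 s0 u \<noteq> 0 \<Longrightarrow> tmeet s0 u = cross2 (X u - X s0) (X1 u) / yc1 s0 u"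
  unfolding tmeet_def by (subst cross2_in_frame) (auto simp: xc_def yc_def xc1_def yc1_def field_simps)

lemma line_inter_tangents:
  "s0 \<in> I \<Longrightarrow> yc1 s0 u \<noteq> 0 \<Longrightarrow>
    line_inter (X s0) (X1 s0) (X u) (X1 u) = X s0 + of_real (tmeet s0 u) * X1 s0"
  by (simp add: line_inter_def tmeet_eq_cross2 yc1_def)

lemma tendsto_tmeet_div:
  assumes s0: "s0 \<in> I"
  shows "((\<lambda>h. tmeet s0 (s0 + h) / h) \<longlongrightarrow> 1/2) (at 0)"
proof -
  let ?F = "\<lambda>h. xc s0 (s0 + h) / h - (yc s0 (s0 + h) / h\<^sup>2) * xc1 s0 (s0 + h) / (yc1 s0 (s0 + h) / h)"
  have "(?F \<longlongrightarrow> 1 - (curv s0 / 2) * 1 / curv s0) (at 0)"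
    using curv_nonzero[OF s0]
    by (intro tendsto_intros tendsto_xc_div tendsto_yc_div_square tendsto_xc1 tendsto_yc1_div s0)
  then have "(?F \<longlongrightarrow> 1/2) (at 0)"
    using curv_nonzero[OF s0] by simp
  moreover have "eventually (\<lambda>h. ?F h = tmeet s0 (s0 + h) / h) (at 0)"
    using eventually_nonzero_at_0 eventually_yc1_nonzero[OF s0]
    by eventually_elim (simp add: tmeet_def field_simps power2_eq_square)
  ultimately show ?thesis
    by (rule Lim_transform_eventually)
qed

lemma tendsto_tmeet:
  assumes s0: "s0 \<in> I"
  shows "((\<lambda>h. tmeet s0 (s0 + h)) \<longlongrightarrow> 0) (at 0)"
proof -
  have "((\<lambda>h. tmeet s0 (s0 + h) / h * h) \<longlongrightarrow> 1/2 * 0) (at 0)"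
    by (intro tendsto_intros tendsto_tmeet_div s0)
  then have "((\<lambda>h. tmeet s0 (s0 + h) / h * h) \<longlongrightarrow> 0) (at 0)"
    by simp
  moreover have "eventually (\<lambda>h. tmeet s0 (s0 + h) / h * h = tmeet s0 (s0 + h)) (at 0)"
    using eventually_nonzero_at_0 by eventually_elim simp
  ultimately show ?thesis
    by (rule Lim_transform_eventually)
qed

text \<open>With \<open>A = X s0\<close>, \<open>A1 = X u\<close>, \<open>A2 = X (s0 + h)\<close>: the vertices \<open>B1\<close>, \<open>B2\<close> lie on the tangent
  at \<open>s0\<close>, and \<open>B\<close> lies on the tangent at \<open>s0 + h\<close> at parameter \<open>\<nu>\<close>.\<close>
lemma U_area_tangent_coords:
  assumes s0: "s0 \<in> I" and u: "u \<in> I" and h: "s0 + h \<in> I"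
    and yc1: "yc1 s0 u \<noteq> 0" "yc1 s0 (s0 + h) \<noteq> 0" and par: "cross2 (X1 u) (X1 (s0 + h)) \<noteq> 0"
  defines "\<nu> \<equiv> cross2 (X u - X (s0 + h)) (X1 u) / cross2 (X1 (s0 + h)) (X1 u)"
  shows "2 * U_area X s0 (u - s0) h =
    \<bar>(tmeet s0 (s0 + h) - tmeet s0 u) * (yc s0 (s0 + h) + \<nu> * yc1 s0 (s0 + h))\<bar>"
proof -
  have "line_inter (X u) (X1 u) (X (s0 + h)) (X1 (s0 + h)) = X (s0 + h) + of_real \<nu> * X1 (s0 + h)"
    using line_inter_commute[OF par] by (simp add: line_inter_def \<nu>_def)
  moreover have "cross2 (X1 s0) (X (s0 + h) + of_real \<nu> * X1 (s0 + h) - X s0)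
      = yc s0 (s0 + h) + \<nu> * yc1 s0 (s0 + h)"
    by (simp add: yc_def yc1_def cross2_def algebra_simps)
  moreover have "cross2 ((A + of_real \<beta> * d) - B) ((A + of_real \<sigma> * d) - B) = (\<sigma> - \<beta>) * cross2 d (B - A)"
    for A B d and \<beta> \<sigma> :: real
    by (simp add: cross2_def algebra_simps)
  ultimately show ?thesis
    using s0 u h yc1
    by (simp add: U_area_def tri_area_def vector_derivative_X line_inter_tangents abs_minus_commute)
qed

lemma eventually_tangents_transversal:
  assumes s0: "s0 \<in> I" and yc1: "yc1 s0 u \<noteq> 0"
  shows "eventually (\<lambda>h. cross2 (X1 u) (X1 (s0 + h)) \<noteq> 0) (at 0)"
proof (rule tendsto_imp_eventually_ne)
  show "((\<lambda>h. cross2 (X1 u) (X1 (s0 + h))) \<longlongrightarrow> cross2 (X1 u) (X1 s0)) (at 0)"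
    using isCont_X1[OF s0] by (intro tendsto_intros) (simp add: isCont_iff)
  show "cross2 (X1 u) (X1 s0) \<noteq> 0"
    using yc1 cross2_commute[of "X1 s0"] by (simp add: yc1_def)
qed

lemma tendsto_U_area_div:
  assumes s0: "s0 \<in> I" and u: "u \<in> I" and yc1: "yc1 s0 u \<noteq> 0"
  shows "((\<lambda>h. 2 * U_area X s0 (u - s0) h / \<bar>h\<bar>) \<longlongrightarrow> \<bar>curv s0\<bar> * (tmeet s0 u)\<^sup>2) (at 0)"
proof -
  let ?\<nu> = "\<lambda>h. cross2 (X u - X (s0 + h)) (X1 u) / cross2 (X1 (s0 + h)) (X1 u)"
  let ?F = "\<lambda>h. \<bar>(tmeet s0 (s0 + h) - tmeet s0 u) * (yc s0 (s0 + h) / h + ?\<nu> h * (yc1 s0 (s0 + h) / h))\<bar>"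
  have X: "((\<lambda>h. X (s0 + h)) \<longlongrightarrow> X s0) (at 0)" and X1: "((\<lambda>h. X1 (s0 + h)) \<longlongrightarrow> X1 s0) (at 0)"
    using isCont_X[OF s0] isCont_X1[OF s0] by (simp_all add: isCont_iff)
  have par: "cross2 (X1 s0) (X1 u) \<noteq> 0" using yc1 by (simp add: yc1_def)
  have "(?\<nu> \<longlongrightarrow> cross2 (X u - X s0) (X1 u) / cross2 (X1 s0) (X1 u)) (at 0)"
    using par by (intro tendsto_intros X X1)
  then have \<nu>: "(?\<nu> \<longlongrightarrow> tmeet s0 u) (at 0)"
    using tmeet_eq_cross2[OF s0 yc1] by (simp add: yc1_def)
  have "(?F \<longlongrightarrow> \<bar>(0 - tmeet s0 u) * (0 + tmeet s0 u * curv s0)\<bar>) (at 0)"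
    by (intro tendsto_intros tendsto_tmeet tendsto_yc_div tendsto_yc1_div \<nu> s0)
  moreover have "\<bar>(0 - tmeet s0 u) * (0 + tmeet s0 u * curv s0)\<bar> = \<bar>curv s0\<bar> * (tmeet s0 u)\<^sup>2"
    by (simp add: abs_mult power2_eq_square)
  ultimately have "(?F \<longlongrightarrow> \<bar>curv s0\<bar> * (tmeet s0 u)\<^sup>2) (at 0)"
    by simp
  moreover note eventually_tangents_transversal[OF s0 yc1]
  then have "eventually (\<lambda>h. ?F h = 2 * U_area X s0 (u - s0) h / \<bar>h\<bar>) (at 0)"
    using eventually_in_I[OF s0] eventually_nonzero_at_0 eventually_yc1_nonzero[OF s0]
  proof eventually_elim
    case (elim h)
    then have "2 * U_area X s0 (u - s0) h / \<bar>h\<bar>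
        = \<bar>(tmeet s0 (s0 + h) - tmeet s0 u) * (yc s0 (s0 + h) + ?\<nu> h * yc1 s0 (s0 + h))\<bar> / \<bar>h\<bar>"
      by (simp add: U_area_tangent_coords[OF s0 u _ yc1])
    also have "\<dots> = ?F h"
      using elim(3) by (simp add: abs_mult field_simps)
    finally show ?case by simp
  qed
  ultimately show ?thesis
    by (rule Lim_transform_eventually)
qed

lemma tendsto_T_area_div:
  assumes s0: "s0 \<in> I"
  shows "((\<lambda>h. 2 * T_area X s0 (u - s0) h / \<bar>h\<bar>) \<longlongrightarrow> \<bar>yc s0 u\<bar>) (at 0)"
proof -
  let ?F = "\<lambda>h. \<bar>xc s0 u * (yc s0 (s0 + h) / h) - yc s0 u * (xc s0 (s0 + h) / h)\<bar>"
  have "(?F \<longlongrightarrow> \<bar>xc s0 u * 0 - yc s0 u * 1\<bar>) (at 0)"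
    by (intro tendsto_intros tendsto_yc_div tendsto_xc_div s0)
  then have "(?F \<longlongrightarrow> \<bar>yc s0 u\<bar>) (at 0)"
    by simp
  moreover have "eventually (\<lambda>h. ?F h = 2 * T_area X s0 (u - s0) h / \<bar>h\<bar>) (at 0)"
  proof (intro always_eventually allI)
    fix h
    have "cross2 (X u - X s0) (X (s0 + h) - X s0) = xc s0 u * yc s0 (s0 + h) - yc s0 u * xc s0 (s0 + h)"
      unfolding xc_def yc_def by (rule cross2_in_frame[OF s0])
    moreover have "2 * T_area X s0 (u - s0) h / \<bar>h\<bar> = \<bar>cross2 (X u - X s0) (X (s0 + h) - X s0) / h\<bar>"
      by (simp add: T_area_def tri_area_def abs_divide)
    ultimately show "?F h = 2 * T_area X s0 (u - s0) h / \<bar>h\<bar>"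
      by (simp add: diff_divide_distrib)
  qed
  ultimately show ?thesis
    by (rule Lim_transform_eventually)
qed

lemma eventually_small_prop_at:
  assumes s0: "s0 \<in> I" and u: "u \<in> I" "u \<noteq> s0" "\<bar>u - s0\<bar> < \<delta>"
    and Q: "small_prop_at I X Q s0 \<delta>"
  shows "eventually (\<lambda>h. Q s0 (u - s0) h) (at 0)"
proof -
  have "((\<lambda>h::real. h) \<longlongrightarrow> 0) (at 0)"
    by (rule tendsto_ident_at)
  then have "eventually (\<lambda>h::real. h \<noteq> u - s0) (at 0)"
    using tendsto_imp_eventually_ne[of "\<lambda>h. h" 0 "at 0" "u - s0"] u(2) by simp
  moreover have "eventually (\<lambda>h::real. \<bar>h\<bar> < \<delta>) (at 0)"
    using u by (intro eventually_abs_less_at_0) linarith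
  ultimately show ?thesis
    using eventually_in_I[OF s0] eventually_nonzero_at_0
  proof eventually_elim
    case (elim h)
    have "X s0 \<noteq> X u" using inj s0 u by (metis inj_onD)
    moreover have "X s0 \<noteq> X (s0 + h)" using inj s0 elim by (metis inj_onD add_cancel_left_right)
    moreover have "X u \<noteq> X (s0 + h)" using inj u elim by (metis inj_onD add_diff_cancel_left')
    ultimately show ?case
      using Q[unfolded small_prop_at_def, rule_format, of "u - s0" h] elim u by simp
  qed
qed

section \<open>The area law near a point\<close>

lemma tmeet_relation_of_half_law:
  assumes s0: "s0 \<in> I" and u: "u \<in> I" "u \<noteq> s0" "\<bar>u - s0\<bar> < \<delta>" and yc1: "yc1 s0 u \<noteq> 0"
    and half: "small_prop_at I X (half_area_law X) s0 \<delta>"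
  shows "2 * curv s0 * (tmeet s0 u)\<^sup>2 = yc s0 u"
proof -
  have "((\<lambda>h. (2 * T_area X s0 (u - s0) h / \<bar>h\<bar>) / 2) \<longlongrightarrow> \<bar>yc s0 u\<bar> / 2) (at 0)"
    by (intro tendsto_intros tendsto_T_area_div s0) simp
  moreover have "eventually (\<lambda>h. (2 * T_area X s0 (u - s0) h / \<bar>h\<bar>) / 2 = 2 * U_area X s0 (u - s0) h / \<bar>h\<bar>) (at 0)"
    using eventually_small_prop_at[OF s0 u half] by eventually_elim simp
  ultimately have "((\<lambda>h. 2 * U_area X s0 (u - s0) h / \<bar>h\<bar>) \<longlongrightarrow> \<bar>yc s0 u\<bar> / 2) (at 0)"
    by (rule Lim_transform_eventually)
  then have eq: "\<bar>curv s0\<bar> * (tmeet s0 u)\<^sup>2 = \<bar>yc s0 u\<bar> / 2"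
    using tendsto_unique[OF _ tendsto_U_area_div[OF s0 u(1) yc1]] by simp
  have sign: "0 \<le> yc s0 u * curv s0"
    using convex[OF s0 u(1)] by (simp add: yc_def curv_def)
  show ?thesis
  proof (cases "curv s0 > 0")
    case True
    with sign have "yc s0 u \<ge> 0" by (simp add: zero_le_mult_iff)
    with eq True show ?thesis by simp
  next
    case False
    with curv_nonzero[OF s0] have "curv s0 < 0" by simp
    with sign have "yc s0 u \<le> 0" by (simp add: zero_le_mult_iff)
    with eq \<open>curv s0 < 0\<close> show ?thesis by simp
  qed
qed

lemma eventually_generic_point:
  assumes s0: "s0 \<in> I" and "\<delta> > 0"
  shows "eventually (\<lambda>h. s0 + h \<in> I \<and> h \<noteq> 0 \<and> \<bar>h\<bar> < \<delta> \<and> yc1 s0 (s0 + h) \<noteq> 0 \<and>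
            yc s0 (s0 + h) \<noteq> 0 \<and> tmeet s0 (s0 + h) \<noteq> 0) (at 0)"
proof -
  have "eventually (\<lambda>h. yc s0 (s0 + h) / h\<^sup>2 \<noteq> 0) (at 0)"
    by (rule tendsto_imp_eventually_ne[OF tendsto_yc_div_square[OF s0]])
      (use curv_nonzero[OF s0] in simp)
  moreover have "eventually (\<lambda>h. tmeet s0 (s0 + h) / h \<noteq> 0) (at 0)"
    by (rule tendsto_imp_eventually_ne[OF tendsto_tmeet_div[OF s0]]) simp
  ultimately show ?thesis
    using eventually_abs_less_at_0[OF \<open>\<delta> > 0\<close>] eventually_in_I[OF s0] eventually_nonzero_at_0
      eventually_yc1_nonzero[OF s0]
    by eventually_elim auto
qed

lemma power_law_at_point:
  assumes s0: "s0 \<in> I" and u: "u \<in> I" "u \<noteq> s0" "\<bar>u - s0\<bar> < \<delta>"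
    and generic: "yc1 s0 u \<noteq> 0" "yc s0 u \<noteq> 0" "tmeet s0 u \<noteq> 0"
    and law: "small_prop_at I X (\<lambda>s h1 h2. U_area X s h1 h2 = lam * T_area X s h1 h2 powr mu) s0 \<delta>"
  shows "mu = 1 \<and> lam = \<bar>curv s0\<bar> * (tmeet s0 u)\<^sup>2 / \<bar>yc s0 u\<bar>"
proof -
  have "mu = 1 \<and> lam = (\<bar>curv s0\<bar> * (tmeet s0 u)\<^sup>2 / 2) / (\<bar>yc s0 u\<bar> / 2)"
  proof (rule power_law_linear_at_0)
    show "((\<lambda>h. U_area X s0 (u - s0) h / \<bar>h\<bar>) \<longlongrightarrow> \<bar>curv s0\<bar> * (tmeet s0 u)\<^sup>2 / 2) (at 0)"
      using tendsto_divide[OF tendsto_U_area_div[OF s0 u(1) generic(1)] tendsto_const[of 2]] by simp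
    show "((\<lambda>h. T_area X s0 (u - s0) h / \<bar>h\<bar>) \<longlongrightarrow> \<bar>yc s0 u\<bar> / 2) (at 0)"
      using tendsto_divide[OF tendsto_T_area_div[OF s0] tendsto_const[of 2]] by simp
    show "\<bar>curv s0\<bar> * (tmeet s0 u)\<^sup>2 / 2 > 0" "\<bar>yc s0 u\<bar> / 2 > 0"
      using curv_nonzero[OF s0] generic by auto
    show "eventually (\<lambda>h. U_area X s0 (u - s0) h / \<bar>h\<bar> * \<bar>h\<bar> =
        lam * (T_area X s0 (u - s0) h / \<bar>h\<bar> * \<bar>h\<bar>) powr mu) (at 0)"
      using eventually_small_prop_at[OF s0 u law] eventually_nonzero_at_0 by eventually_elim simp
  qed
  then show ?thesis by simp
qed

lemma power_law_coefficients:
  assumes s0: "s0 \<in> I" and "\<delta> > 0"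
    and law: "small_prop_at I X (\<lambda>s h1 h2. U_area X s h1 h2 = lam * T_area X s h1 h2 powr mu) s0 \<delta>"
  shows "mu = 1 \<and> lam = 1/2"
proof -
  let ?L = "\<lambda>h. \<bar>curv s0\<bar> * (tmeet s0 (s0 + h) / h)\<^sup>2 / \<bar>yc s0 (s0 + h) / h\<^sup>2\<bar>"
  have ev: "eventually (\<lambda>h. mu = 1 \<and> lam = ?L h) (at 0)"
    using eventually_generic_point[OF s0 \<open>\<delta> > 0\<close>]
  proof eventually_elim
    case (elim h)
    then have "mu = 1 \<and> lam = \<bar>curv s0\<bar> * (tmeet s0 (s0 + h))\<^sup>2 / \<bar>yc s0 (s0 + h)\<bar>"
      using power_law_at_point[OF s0 _ _ _ _ _ _ law, of "s0 + h"] by simp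
    with elim show ?case
      by (simp add: power_divide abs_divide)
  qed
  have "(?L \<longlongrightarrow> \<bar>curv s0\<bar> * (1/2)\<^sup>2 / \<bar>curv s0 / 2\<bar>) (at 0)"
    using curv_nonzero[OF s0] by (intro tendsto_intros tendsto_tmeet_div tendsto_yc_div_square s0) simp
  moreover have "\<bar>curv s0\<bar> * (1/2)\<^sup>2 / \<bar>curv s0 / 2\<bar> = 1/2"
    using curv_nonzero[OF s0] by (simp add: power2_eq_square)
  ultimately have "(?L \<longlongrightarrow> 1/2) (at 0)"
    by (simp only:)
  moreover have "eventually (\<lambda>h. ?L h = lam) (at 0)"
    using ev by eventually_elim simp
  ultimately have "((\<lambda>h. lam) \<longlongrightarrow> 1/2) (at (0::real))"
    by (rule Lim_transform_eventually)
  then have "lam = 1/2"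
    by (rule tendsto_unique[OF at_neq_bot tendsto_const])
  moreover have "mu = 1"
    using ev eventually_happens[of _ "at (0::real)"] by auto
  ultimately show ?thesis by simp
qed

lemma local_tmeet_relation:
  assumes s0: "s0 \<in> I" and "\<delta> > 0"
    and half: "small_prop_at I X (half_area_law X) s0 \<delta>"
  obtains \<epsilon> where "\<epsilon> > 0" and "\<And>u. 0 < \<bar>u - s0\<bar> \<Longrightarrow> \<bar>u - s0\<bar> < \<epsilon> \<Longrightarrow>
      u \<in> I \<and> yc1 s0 u \<noteq> 0 \<and> yc s0 u \<noteq> 0 \<and> 2 * curv s0 * (tmeet s0 u)\<^sup>2 = yc s0 u"
proof -
  obtain \<epsilon> where "\<epsilon> > 0" and \<epsilon>: "\<And>h. h \<noteq> 0 \<Longrightarrow> \<bar>h\<bar> < \<epsilon> \<Longrightarrow> s0 + h \<in> I \<and> \<bar>h\<bar> < \<delta> \<and>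
      yc1 s0 (s0 + h) \<noteq> 0 \<and> yc s0 (s0 + h) \<noteq> 0"
    using eventually_generic_point[OF s0 \<open>\<delta> > 0\<close>] unfolding eventually_at
    by (auto simp: dist_real_def)
  show ?thesis
  proof (rule that[OF \<open>\<epsilon> > 0\<close>])
    fix u assume "0 < \<bar>u - s0\<bar>" "\<bar>u - s0\<bar> < \<epsilon>"
    with \<epsilon>[of "u - s0"] have "u \<in> I" "\<bar>u - s0\<bar> < \<delta>" "yc1 s0 u \<noteq> 0" "yc s0 u \<noteq> 0"
      by auto
    with tmeet_relation_of_half_law[OF s0 \<open>u \<in> I\<close> _ _ _ half] \<open>0 < \<bar>u - s0\<bar>\<close>
    show "u \<in> I \<and> yc1 s0 u \<noteq> 0 \<and> yc s0 u \<noteq> 0 \<and> 2 * curv s0 * (tmeet s0 u)\<^sup>2 = yc s0 u"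
      by auto
  qed
qed

section \<open>From the half-area law to a parabola\<close>

lemma DERIV_tmeet:
  "u \<in> I \<Longrightarrow> yc1 s0 u \<noteq> 0 \<Longrightarrow> DERIV (tmeet s0) u :> xc1 s0 u -
    ((yc1 s0 u * xc1 s0 u + xc2 s0 u * yc s0 u) * yc1 s0 u - yc s0 u * xc1 s0 u * yc2 s0 u)
      / (yc1 s0 u * yc1 s0 u)"
  unfolding tmeet_def[abs_def]
  by (intro DERIV_diff DERIV_divide DERIV_mult DERIV_xc DERIV_yc DERIV_xc1 DERIV_yc1)

text \<open>The ODE step: differentiating \<open>2 curv (tmeet)\<^sup>2 = yc\<close> shows that
  \<open>(2 tmeet - xc) / yc\<close> has zero derivative, so it is a constant \<open>b\<close>.\<close>
lemma conic_of_tmeet_relation: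
  assumes s0: "s0 \<in> I" and S: "open S" "convex S"
    and rel: "\<And>u. u \<in> S \<Longrightarrow> u \<in> I \<and> yc1 s0 u \<noteq> 0 \<and> yc s0 u \<noteq> 0 \<and> 2 * curv s0 * (tmeet s0 u)\<^sup>2 = yc s0 u"
  obtains b where "\<And>u. u \<in> S \<Longrightarrow> curv s0 * (xc s0 u + b * yc s0 u)\<^sup>2 = 2 * yc s0 u"
proof -
  let ?k = "curv s0" and ?t = "tmeet s0" and ?x = "xc s0" and ?y = "yc s0"
  define q where "q u = (2 * ?t u - ?x u) / ?y u" for u
  have "(q has_field_derivative 0) (at u within S)" if u: "u \<in> S" for u
  proof -
    from rel[OF u] have uI: "u \<in> I" and y1: "yc1 s0 u \<noteq> 0" and y: "?y u \<noteq> 0" by auto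
    obtain t' where t': "DERIV ?t u :> t'"
      using DERIV_tmeet[OF uI y1] by blast
    have "DERIV (\<lambda>u. 2 * ?k * (?t u * ?t u) - ?y u) u :> 2 * ?k * (t' * ?t u + t' * ?t u) - yc1 s0 u"
      by (intro DERIV_diff DERIV_cmult DERIV_mult t' DERIV_yc uI)
    then have "2 * ?k * (t' * ?t u + t' * ?t u) - yc1 s0 u = 0"
      by (rule DERIV_zero_if_vanishing_on_open[OF S(1) u, rotated]) (use rel in \<open>simp add: power2_eq_square\<close>)
    then have y1_eq: "yc1 s0 u = 4 * ?k * ?t u * t'"
      by (simp add: algebra_simps)
    have x1_eq: "xc1 s0 u * ?y u = (?x u - ?t u) * yc1 s0 u"
      using y1 by (simp add: tmeet_def field_simps)
    have "DERIV q u :> ((2 * t' - xc1 s0 u) * ?y u - (2 * ?t u - ?x u) * yc1 s0 u) / (?y u * ?y u)"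
      unfolding q_def[abs_def] using y by (intro DERIV_divide DERIV_diff DERIV_cmult t' DERIV_xc DERIV_yc uI)
    moreover have "(2 * t' - xc1 s0 u) * ?y u - (2 * ?t u - ?x u) * yc1 s0 u
        = 2 * t' * (?y u - 2 * ?k * (?t u * ?t u))"
      using x1_eq unfolding y1_eq by algebra
    moreover have "?y u - 2 * ?k * (?t u * ?t u) = 0"
      using rel[OF u] by (simp add: power2_eq_square)
    ultimately show ?thesis
      by (simp add: has_field_derivative_at_within)
  qed
  then obtain b where b: "\<And>u. u \<in> S \<Longrightarrow> q u = b"
    using has_field_derivative_zero_constant[OF S(2)] by blast
  show ?thesis
  proof (rule that)
    fix u assume u: "u \<in> S"
    with b rel have "?x u + b * ?y u = 2 * ?t u"
      by (simp add: q_def field_simps)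
    with rel[OF u] show "?k * (?x u + b * ?y u)\<^sup>2 = 2 * ?y u"
      by (simp add: power2_eq_square algebra_simps)
  qed
qed

lemma conic_coefficient:
  assumes s0: "s0 \<in> I" and S: "open S" "S \<subseteq> I" "s0 islimpt S"
    and conic: "\<And>u. u \<in> S \<Longrightarrow> curv s0 * (xc s0 u + b * yc s0 u)\<^sup>2 = 2 * yc s0 u"
  shows "3 * curv s0 * (xc2 s0 s0 + b * curv s0) = yc3 s0 s0"
proof -
  let ?k = "curv s0"
  define R where "R u = xc s0 u + b * yc s0 u" for u
  define R1 where "R1 u = xc1 s0 u + b * yc1 s0 u" for u
  define R2 where "R2 u = xc2 s0 u + b * yc2 s0 u" for u
  define R3 where "R3 u = xc3 s0 u + b * yc3 s0 u" for u
  have dR: "DERIV R u :> R1 u" "DERIV R1 u :> R2 u" "DERIV R2 u :> R3 u" if "u \<in> I" for u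
    unfolding R_def[abs_def] R1_def[abs_def] R2_def[abs_def] R3_def using that
    by (intro DERIV_add DERIV_cmult DERIV_xc DERIV_yc DERIV_xc1 DERIV_yc1 DERIV_xc2 DERIV_yc2; assumption)+
  define G1 where "G1 u = ?k * (R1 u * R u + R1 u * R u) - 2 * yc1 s0 u" for u
  define G2 where "G2 u = ?k * ((R2 u * R u + R1 u * R1 u) + (R2 u * R u + R1 u * R1 u)) - 2 * yc2 s0 u" for u
  define G3 where "G3 u = ?k * (((R3 u * R u + R1 u * R2 u) + (R2 u * R1 u + R2 u * R1 u)) +
    ((R3 u * R u + R1 u * R2 u) + (R2 u * R1 u + R2 u * R1 u))) - 2 * yc3 s0 u" for u
  have "G3 s0 = 0"
  proof (rule third_derivative_zero_at_limit_point[OF S(1,3)])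
    show "?k * (R u * R u) - 2 * yc s0 u = 0" if "u \<in> S" for u
      using conic[OF that] by (simp add: R_def power2_eq_square)
    show "DERIV (\<lambda>u. ?k * (R u * R u) - 2 * yc s0 u) u :> G1 u" if "u \<in> S" for u
      unfolding G1_def using that S(2) by (intro DERIV_diff DERIV_cmult DERIV_mult dR DERIV_yc) auto
    show "DERIV G1 u :> G2 u" if "u \<in> S" for u
      unfolding G1_def[abs_def] G2_def using that S(2)
      by (intro DERIV_diff DERIV_cmult DERIV_mult DERIV_add dR DERIV_yc1) auto
    show "DERIV G2 u :> G3 u" if "u \<in> S" for u
      unfolding G2_def[abs_def] G3_def using that S(2)
      by (intro DERIV_diff DERIV_cmult DERIV_mult DERIV_add dR DERIV_yc2) auto
    have "isCont R s0" "isCont R1 s0" "isCont R2 s0"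
      using dR[OF s0] by (auto intro: DERIV_isCont)
    moreover have "isCont R3 s0" "isCont (yc3 s0) s0"
      using isCont_X3[OF s0] unfolding isCont_def R3_def xc3_def yc3_def by (auto intro!: tendsto_intros)
    ultimately show "isCont G3 s0"
      unfolding G3_def[abs_def] by (intro continuous_intros)
  qed
  then show ?thesis
    using xc1_self[OF s0] by (simp add: G3_def R_def R1_def R2_def yc2_self algebra_simps)
qed

lemma local_conic:
  assumes s0: "s0 \<in> I" and "\<delta> > 0"
    and half: "small_prop_at I X (half_area_law X) s0 \<delta>"
  obtains \<epsilon> b where "\<epsilon> > 0"
    and "\<And>u. \<bar>u - s0\<bar> < \<epsilon> \<Longrightarrow> u \<in> I \<and> curv s0 * (xc s0 u + b * yc s0 u)\<^sup>2 = 2 * yc s0 u"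
proof -
  obtain \<epsilon> where "\<epsilon> > 0" and \<epsilon>: "\<And>u. 0 < \<bar>u - s0\<bar> \<Longrightarrow> \<bar>u - s0\<bar> < \<epsilon> \<Longrightarrow>
      u \<in> I \<and> yc1 s0 u \<noteq> 0 \<and> yc s0 u \<noteq> 0 \<and> 2 * curv s0 * (tmeet s0 u)\<^sup>2 = yc s0 u"
    using local_tmeet_relation[OF s0 \<open>\<delta> > 0\<close> half] by blast
  define R where "R = {s0<..<s0 + \<epsilon>}"
  define L where "L = {s0 - \<epsilon><..<s0}"
  have near: "0 < \<bar>u - s0\<bar> \<and> \<bar>u - s0\<bar> < \<epsilon>" if "u \<in> R \<union> L" for u
    using that by (auto simp: R_def L_def)
  have RL_I: "R \<subseteq> I" "L \<subseteq> I"
    using \<epsilon> near by blast+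
  have RL_limpt: "s0 islimpt R" "s0 islimpt L"
    using \<open>\<epsilon> > 0\<close> by (simp_all add: R_def L_def islimpt_greaterThanLessThan1 islimpt_greaterThanLessThan2)
  obtain b1 where b1: "\<And>u. u \<in> R \<Longrightarrow> curv s0 * (xc s0 u + b1 * yc s0 u)\<^sup>2 = 2 * yc s0 u"
    using conic_of_tmeet_relation[OF s0, of R] \<epsilon> by (auto simp: R_def)
  obtain b2 where b2: "\<And>u. u \<in> L \<Longrightarrow> curv s0 * (xc s0 u + b2 * yc s0 u)\<^sup>2 = 2 * yc s0 u"
    using conic_of_tmeet_relation[OF s0, of L] \<epsilon> by (auto simp: L_def)
  have "3 * curv s0 * (xc2 s0 s0 + b1 * curv s0) = 3 * curv s0 * (xc2 s0 s0 + b2 * curv s0)"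
    using conic_coefficient[OF s0 _ RL_I(1) RL_limpt(1) b1] conic_coefficient[OF s0 _ RL_I(2) RL_limpt(2) b2]
    by (simp add: R_def L_def)
  then have "b1 = b2"
    using curv_nonzero[OF s0] by simp
  show ?thesis
  proof (rule that[OF \<open>\<epsilon> > 0\<close>])
    fix u assume "\<bar>u - s0\<bar> < \<epsilon>"
    then consider "u = s0" | "u \<in> R" | "u \<in> L"
      unfolding R_def L_def by fastforce
    then show "u \<in> I \<and> curv s0 * (xc s0 u + b1 * yc s0 u)\<^sup>2 = 2 * yc s0 u"
      by cases (use s0 b1 b2 RL_I \<open>b1 = b2\<close> in auto)
  qed
qed

lemma local_parabola:
  assumes half: "small_prop I X (half_area_law X)"
    and s0: "s0 \<in> I"
  obtains \<epsilon> a u c where "\<epsilon> > 0" "norm u = 1" "c \<noteq> 0" "ball s0 \<epsilon> \<subseteq> I"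
    "X ` ball s0 \<epsilon> \<subseteq> parabola_set a u c"
proof -
  obtain \<delta> where "\<delta> > 0" "small_prop_at I X (half_area_law X) s0 \<delta>"
    using half s0 unfolding small_prop_iff_small_prop_at by blast
  then obtain \<epsilon> b where "\<epsilon> > 0"
    and conic: "\<And>v. \<bar>v - s0\<bar> < \<epsilon> \<Longrightarrow> v \<in> I \<and> curv s0 * (xc s0 v + b * yc s0 v)\<^sup>2 = 2 * yc s0 v"
    using local_conic[OF s0] by blast
  obtain a u c where "norm u = 1" "c \<noteq> 0" and sub:
    "{z. curv s0 * (X1 s0 \<bullet> (z - X s0) + b * cross2 (X1 s0) (z - X s0))\<^sup>2 = 2 * cross2 (X1 s0) (z - X s0)}
      \<subseteq> parabola_set a u c"
    using conic_subset_parabola_set[OF unit_speed[OF s0] curv_nonzero[OF s0]] by blast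
  have "ball s0 \<epsilon> \<subseteq> I" "X ` ball s0 \<epsilon> \<subseteq> parabola_set a u c"
    using conic sub by (force simp: dist_real_def abs_minus_commute xc_def yc_def)+
  with \<open>\<epsilon> > 0\<close> \<open>norm u = 1\<close> \<open>c \<noteq> 0\<close> show ?thesis
    using that by blast
qed

lemma infinite_image_of_open:
  assumes "open V" "V \<noteq> {}" "V \<subseteq> I"
  shows "infinite (X ` V)"
proof
  assume "finite (X ` V)"
  then have "finite V"
    using finite_imageD inj_on_subset[OF inj assms(3)] by blast
  with assms(1,2) show False
    using finite_imp_not_open by blast
qed

lemma parabola_through_curve_unique:
  assumes "open V" "V \<noteq> {}" "V \<subseteq> I" "u1 \<noteq> 0" "u2 \<noteq> 0"
    and "X ` V \<subseteq> parabola_set a1 u1 c1" "X ` V \<subseteq> parabola_set a2 u2 c2"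
  shows "parabola_set a1 u1 c1 = parabola_set a2 u2 c2"
  using parabola_set_unique[OF assms(4,5) infinite_image_of_open[OF assms(1-3)] assms(6,7)] .

definition locally_on :: "complex set \<Rightarrow> real \<Rightarrow> bool" where
  "locally_on P s \<longleftrightarrow> (\<exists>\<epsilon>>0. ball s \<epsilon> \<subseteq> I \<and> X ` ball s \<epsilon> \<subseteq> P)"

lemma locally_on_parabola_propagates:
  assumes half: "small_prop I X (half_area_law X)"
    and "a \<in> I" and P: "P = parabola_set a0 u0 c0" "u0 \<noteq> 0"
  obtains T where "openin (top_of_set I) T" "a \<in> T"
    "\<And>x y. x \<in> T \<Longrightarrow> y \<in> T \<Longrightarrow> locally_on P x \<Longrightarrow> locally_on P y"
proof -
  obtain \<epsilon> a' u c where "\<epsilon> > 0" "norm u = 1" "c \<noteq> 0" and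
    near_a: "ball a \<epsilon> \<subseteq> I" "X ` ball a \<epsilon> \<subseteq> parabola_set a' u c"
    by (rule local_parabola[OF half \<open>a \<in> I\<close>])
  have "locally_on P y" if x: "x \<in> ball a \<epsilon>" and y: "y \<in> ball a \<epsilon>" and "locally_on P x" for x y
  proof -
    obtain \<epsilon>x where "\<epsilon>x > 0" and near_x: "ball x \<epsilon>x \<subseteq> I" "X ` ball x \<epsilon>x \<subseteq> P"
      using \<open>locally_on P x\<close> unfolding locally_on_def by blast
    have "x \<in> ball x \<epsilon>x \<inter> ball a \<epsilon>"
      using \<open>\<epsilon>x > 0\<close> x by simp
    then have "ball x \<epsilon>x \<inter> ball a \<epsilon> \<noteq> {}"
      by blast
    moreover have "u \<noteq> 0" using \<open>norm u = 1\<close> by auto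
    ultimately have "parabola_set a' u c = P"
      unfolding P(1) using near_x near_a P(1,2)
      by (intro parabola_through_curve_unique[where V = "ball x \<epsilon>x \<inter> ball a \<epsilon>"]) auto
    moreover obtain \<epsilon>y where "\<epsilon>y > 0" and y_a: "ball y \<epsilon>y \<subseteq> ball a \<epsilon>"
      using y openE open_ball by blast
    ultimately have "ball y \<epsilon>y \<subseteq> I" "X ` ball y \<epsilon>y \<subseteq> P"
      using near_a y_a by (auto dest: image_mono)
    with \<open>\<epsilon>y > 0\<close> show ?thesis
      unfolding locally_on_def by blast
  qed
  moreover have "openin (top_of_set I) (ball a \<epsilon>)"
    using near_a(1) by (simp add: openin_open_eq open_I)
  moreover have "a \<in> ball a \<epsilon>"
    using \<open>\<epsilon> > 0\<close> by simp
  ultimately show ?thesis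
    using that by blast
qed

text \<open>Near each point the curve lies on some parabola, and two such parabolas agree wherever the
  neighbourhoods overlap; connectedness of \<open>I\<close> makes the parabola global.\<close>
lemma half_law_imp_parabola:
  assumes half: "small_prop I X (half_area_law X)"
  shows "\<exists>P. parabola P \<and> X ` I \<subseteq> P \<and> openin (top_of_set P) (X ` I)"
proof -
  obtain s0 where "s0 \<in> I" using nonempty by blast
  then obtain \<epsilon>0 a0 u0 c0 where "\<epsilon>0 > 0" "norm u0 = 1" "c0 \<noteq> 0"
    "ball s0 \<epsilon>0 \<subseteq> I" "X ` ball s0 \<epsilon>0 \<subseteq> parabola_set a0 u0 c0"
    by (rule local_parabola[OF half])
  define P0 where "P0 = parabola_set a0 u0 c0"
  have "locally_on P0 s" if "s \<in> I" for s
  proof (rule connected_induction_simple[of I s0 s "locally_on P0"])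
    show "connected I" using interval_I by (simp add: is_interval_connected)
    show "locally_on P0 s0"
      unfolding locally_on_def P0_def using \<open>\<epsilon>0 > 0\<close> \<open>ball s0 \<epsilon>0 \<subseteq> I\<close> \<open>X ` ball s0 \<epsilon>0 \<subseteq> _\<close> by blast
    show "\<exists>T. openin (top_of_set I) T \<and> a \<in> T \<and> (\<forall>x\<in>T. \<forall>y\<in>T. locally_on P0 x \<longrightarrow> locally_on P0 y)"
      if a: "a \<in> I" for a
    proof -
      have "u0 \<noteq> 0" using \<open>norm u0 = 1\<close> by auto
      then obtain T where "openin (top_of_set I) T" "a \<in> T"
        "\<And>x y. x \<in> T \<Longrightarrow> y \<in> T \<Longrightarrow> locally_on P0 x \<Longrightarrow> locally_on P0 y"
        using locally_on_parabola_propagates[OF half a P0_def] by blast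
      then show ?thesis by blast
    qed
  qed fact+
  then have "X ` I \<subseteq> P0"
    unfolding locally_on_def by (meson centre_in_ball image_subset_iff subset_iff)
  moreover have "continuous_on I X"
    by (intro continuous_at_imp_continuous_on ballI isCont_X)
  ultimately have "openin (top_of_set P0) (X ` I)"
    unfolding P0_def using \<open>norm u0 = 1\<close> by (intro openin_parabola_set_image inj open_I) auto
  moreover have "parabola P0"
    unfolding P0_def parabola_iff_parabola_set using \<open>norm u0 = 1\<close> \<open>c0 \<noteq> 0\<close> by blast
  ultimately show ?thesis
    using \<open>X ` I \<subseteq> P0\<close> by blast
qed

lemma tangent_of_curve_on_parabola:
  assumes u: "u \<noteq> 0" and sub: "X ` I \<subseteq> parabola_set a u c" and t: "t \<in> I"
  shows "X1 t = of_real (Re (X1 t / u)) * parabola_tangent u c (Re ((X t - a) / u))"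
    and "Re (X1 t / u) \<noteq> 0"
proof -
  define \<phi> where "\<phi> t = Re ((X t - a) / u)" for t
  have on_parabola: "X t = parabola_point a u c (\<phi> t)" if "t \<in> I" for t
    using parabola_point_Re_coord[OF u] sub that unfolding \<phi>_def by blast
  have "((\<lambda>t. (X t - a) / u) has_vector_derivative X1 t / u) (at t)"
    using D1[OF t] by (intro bounded_linear.has_vector_derivative[OF bounded_linear_divide])
      (simp add: has_vector_derivative_diff_const)
  then have "(\<phi> has_vector_derivative Re (X1 t / u)) (at t)"
    unfolding \<phi>_def by (rule bounded_linear.has_vector_derivative[OF bounded_linear_Re])
  from vector_diff_chain_at[OF this has_vector_derivative_parabola_point]
  have "(X has_vector_derivative Re (X1 t / u) *\<^sub>R parabola_tangent u c (\<phi> t)) (at t)"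
    by (rule has_vector_derivative_transform_within_open[OF _ open_I t]) (simp add: on_parabola)
  then show X1: "X1 t = of_real (Re (X1 t / u)) * parabola_tangent u c (Re ((X t - a) / u))"
    using vector_derivative_unique_at[OF D1[OF t]] unfolding \<phi>_def scaleR_conv_of_real by blast
  show "Re (X1 t / u) \<noteq> 0"
    using X1 unit_speed[OF t] by auto
qed

lemma half_law_on_parabola:
  assumes u: "norm u = 1" and c: "c \<noteq> 0" and sub: "X ` I \<subseteq> parabola_set a u c"
    and s: "s \<in> I" "s + h1 \<in> I" "s + h2 \<in> I"
    and ne: "X s \<noteq> X (s + h1)" "X s \<noteq> X (s + h2)" "X (s + h1) \<noteq> X (s + h2)"
  shows "U_area X s h1 h2 = T_area X s h1 h2 / 2"
proof -
  have u0: "u \<noteq> 0" using u by auto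
  define \<phi> where "\<phi> t = Re ((X t - a) / u)" for t
  define r where "r t = Re (X1 t / u)" for t
  have X: "X t = parabola_point a u c (\<phi> t)" if "t \<in> I" for t
    using parabola_point_Re_coord[OF u0] sub that unfolding \<phi>_def by blast
  have X1: "X1 t = of_real (r t) * parabola_tangent u c (\<phi> t)" "r t \<noteq> 0" if "t \<in> I" for t
    using tangent_of_curve_on_parabola[OF u0 sub that] unfolding r_def \<phi>_def by auto
  have "\<phi> s \<noteq> \<phi> (s + h1)" "\<phi> s \<noteq> \<phi> (s + h2)" "\<phi> (s + h1) \<noteq> \<phi> (s + h2)"
    using ne X s by metis+
  from tangent_triangle_area_parabola[OF u c this X1(2)[OF s(1)] X1(2)[OF s(2)] X1(2)[OF s(3)]]
  show ?thesis
    using s by (simp add: U_area_def T_area_def Let_def vector_derivative_X X X1(1))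
qed

lemma power_law_iff_half_law:
  "(\<exists>lam mu :: real \<Rightarrow> real. small_prop I X (\<lambda>s h1 h2. U_area X s h1 h2 = lam s * T_area X s h1 h2 powr mu s))
    \<longleftrightarrow> small_prop I X (half_area_law X)"
proof
  assume "\<exists>lam mu :: real \<Rightarrow> real. small_prop I X (\<lambda>s h1 h2. U_area X s h1 h2 = lam s * T_area X s h1 h2 powr mu s)"
  then obtain lam mu :: "real \<Rightarrow> real"
    where law: "small_prop I X (\<lambda>s h1 h2. U_area X s h1 h2 = lam s * T_area X s h1 h2 powr mu s)"
    by blast
  show "small_prop I X (half_area_law X)"
    unfolding small_prop_iff_small_prop_at
  proof
    fix s assume "s \<in> I"
    with law obtain \<delta> where "\<delta> > 0"
      and law_s: "small_prop_at I X (\<lambda>s' h1 h2. U_area X s' h1 h2 = lam s * T_area X s' h1 h2 powr mu s) s \<delta>"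
      unfolding small_prop_iff_small_prop_at small_prop_at_def by blast
    have "mu s = 1" "lam s = 1/2"
      using power_law_coefficients[OF \<open>s \<in> I\<close> \<open>\<delta> > 0\<close> law_s] by auto
    with law_s \<open>\<delta> > 0\<close> show "\<exists>\<delta>>0. small_prop_at I X (half_area_law X) s \<delta>"
      by (auto simp: small_prop_at_def T_area_def tri_area_def)
  qed
next
  assume "small_prop I X (half_area_law X)"
  then have "small_prop I X (\<lambda>s h1 h2. U_area X s h1 h2 = 1/2 * T_area X s h1 h2 powr 1)"
    unfolding small_prop_def by (simp add: T_area_def tri_area_def)
  then show "\<exists>lam mu :: real \<Rightarrow> real. small_prop I X (\<lambda>s h1 h2. U_area X s h1 h2 = lam s * T_area X s h1 h2 powr mu s)"
    by (intro exI[of _ "\<lambda>_. 1/2"] exI[of _ "\<lambda>_. 1"])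
qed

lemma half_law_iff_parabola:
  "small_prop I X (half_area_law X)
    \<longleftrightarrow> (\<exists>P. parabola P \<and> X ` I \<subseteq> P \<and> openin (top_of_set P) (X ` I))"
proof
  assume "\<exists>P. parabola P \<and> X ` I \<subseteq> P \<and> openin (top_of_set P) (X ` I)"
  then obtain a u c where "norm u = 1" "c \<noteq> 0" "X ` I \<subseteq> parabola_set a u c"
    unfolding parabola_iff_parabola_set by blast
  then show "small_prop I X (half_area_law X)"
    unfolding small_prop_def using half_law_on_parabola by (metis zero_less_one)
qed (rule half_law_imp_parabola)

end

lemma convex_unit_speed_curveI:
  assumes "strictly_convex_curve I X" and "arclength_param I X"
  obtains X1 X2 X3 where "convex_unit_speed_curve I X X1 X2 X3"
proof -
  obtain X1 X2 X3 where D1: "\<forall>t\<in>I. (X has_vector_derivative X1 t) (at t)"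
    and D2: "\<forall>t\<in>I. (X1 has_vector_derivative X2 t) (at t)"
    and D3: "\<forall>t\<in>I. (X2 has_vector_derivative X3 t) (at t)" and "continuous_on I X3"
    using assms(1) unfolding strictly_convex_curve_def C3_on_def by blast
  have "open I" "is_interval I" "I \<noteq> {}" "inj_on X I"
    using assms(1) unfolding strictly_convex_curve_def open_interval_def by auto
  have vd1: "vector_derivative X (at t) = X1 t" if "t \<in> I" for t
    using D1 that vector_derivative_at by blast
  have vd2: "vector_derivative (\<lambda>u. vector_derivative X (at u)) (at t) = X2 t" if t: "t \<in> I" for t
  proof -
    have "((\<lambda>u. vector_derivative X (at u)) has_vector_derivative X2 t) (at t)"
      by (rule has_vector_derivative_transform_within_open[OF _ \<open>open I\<close> t]) (use D2 t vd1 in auto)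
    then show ?thesis by (rule vector_derivative_at)
  qed
  have side: "((\<forall>u\<in>I. cross2 (X1 t) (X u - X t) \<ge> 0) \<and> cross2 (X1 t) (X2 t) > 0) \<or>
      ((\<forall>u\<in>I. cross2 (X1 t) (X u - X t) \<le> 0) \<and> cross2 (X1 t) (X2 t) < 0)" if "t \<in> I" for t
    using assms(1) that vd1 vd2 unfolding strictly_convex_curve_def by (auto simp: Let_def)
  show ?thesis
  proof (rule that, unfold_locales)
    show "norm (X1 t) = 1" if "t \<in> I" for t
      using assms(2) that vd1 unfolding arclength_param_def by auto
    show "cross2 (X1 t) (X u - X t) * cross2 (X1 t) (X2 t) \<ge> 0" if "t \<in> I" "u \<in> I" for t u
      using side[OF that(1)] that(2) by (auto intro: mult_nonneg_nonneg mult_nonpos_nonpos)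
    show "cross2 (X1 t) (X2 t) \<noteq> 0" if "t \<in> I" for t
      using side[OF that] by auto
  qed (use D1 D2 D3 \<open>continuous_on I X3\<close> \<open>open I\<close> \<open>is_interval I\<close> \<open>I \<noteq> {}\<close> \<open>inj_on X I\<close> in auto)
qed

theorem corollary8:
  fixes X :: "real \<Rightarrow> complex" and I :: "real set"
  assumes "strictly_convex_curve I X" and "arclength_param I X"
  shows "((\<exists>lam mu :: real \<Rightarrow> real. small_prop I X
              (\<lambda>s h1 h2. U_area X s h1 h2 = lam s * T_area X s h1 h2 powr mu s))
          \<longleftrightarrow> small_prop I X (\<lambda>s h1 h2. U_area X s h1 h2 = T_area X s h1 h2 / 2))
       \<and> (small_prop I X (\<lambda>s h1 h2. U_area X s h1 h2 = T_area X s h1 h2 / 2)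
          \<longleftrightarrow> (\<exists>P. parabola P \<and> X ` I \<subseteq> P \<and> openin (top_of_set P) (X ` I)))"
proof -
  obtain X1 X2 X3 where "convex_unit_speed_curve I X X1 X2 X3"
    using convex_unit_speed_curveI[OF assms] .
  then interpret convex_unit_speed_curve I X X1 X2 X3 .
  show ?thesis
    using power_law_iff_half_law half_law_iff_parabola by blast
qed

end
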